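(* Let $f(x)=\sum_{i=1}^Bp_i\|x_{(i)}\|$ with $p_i>0$, where $x=(x_{(1)},\dots,x_{(B)})$, $x_{(i)}\in\mathbb{R}^{n_i}$, $\sum_in_i=n$, and let $g:\mathbb{R}^n\to\mathbb{R}$ be differentiable and strongly convex. Consider $\min_{x}f(x)$ s.t. $g(x)\le0$. Assume there is $\tilde x$ with $g(\tilde x)<0$, and that every minimizer $x_0^*$ of $f$ over $\mathbb{R}^n$ satisfies $g(x_0^* )>0$. Then the KKT point of this problem is unique, i.e. there is exactly one pair $(x^*,y^* )\in\mathbb{R}^n\times\mathbb{R}_+$ with $0\in\partial f(x^* )+y^*\nabla g(x^* )$ and $y^*g(x^* )=0$.
   Context: $\|\cdot\|$ is the Euclidean norm; $\partial f$ is the convex subdifferential. *)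

theory Defs
  imports "HOL-Analysis.Analysis"
begin

definition subdiff :: "('a::real_inner \<Rightarrow> real) \<Rightarrow> 'a \<Rightarrow> 'a set" where
  "subdiff f x = {s. \<forall>z. f z \<ge> f x + s \<bullet> (z - x)}"

definition strongly_convex :: "('a::real_normed_vector \<Rightarrow> real) \<Rightarrow> bool" where
  "strongly_convex g \<longleftrightarrow> (\<exists>mu>0. \<forall>x y t. 0 \<le> t \<and> t \<le> 1 \<longrightarrow>
      g (t *\<^sub>R x + (1 - t) *\<^sub>R y) \<le> t * g x + (1 - t) * g y - mu / 2 * t * (1 - t) * (norm (x - y))\<^sup>2)"

definition grad :: "('a::real_inner \<Rightarrow> real) \<Rightarrow> 'a \<Rightarrow> 'a" where
  "grad g x = (SOME G. (g has_derivative (\<lambda>h. G \<bullet> h)) (at x))"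

text \<open>Euclidean norm of the i-th block x_(i), where blk j is the block of coordinate j.\<close>
definition block_norm :: "('n::finite \<Rightarrow> nat) \<Rightarrow> nat \<Rightarrow> real ^ 'n \<Rightarrow> real" where
  "block_norm blk i x = sqrt (\<Sum>j\<in>{j. blk j = i}. (x $ j)\<^sup>2)"

definition kkt_point :: "('a::real_inner \<Rightarrow> real) \<Rightarrow> ('a \<Rightarrow> real) \<Rightarrow> 'a \<Rightarrow> real \<Rightarrow> bool" where
  "kkt_point f g x y \<longleftrightarrow> y \<ge> 0 \<and> g x \<le> 0 \<and>
      0 \<in> (\<lambda>s. s + y *\<^sub>R grad g x) ` subdiff f x \<and> y * g x = 0"

end

theory Submission
  imports Defs
begin

(* A KKT point (x, y) minimizes f on K = {g \<le> 0}: the subgradient inequality and the tangent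
   inequality for g give f z \<ge> f x - y g z. As the unconstrained minimizers are infeasible, y > 0
   and x lies on the boundary g = 0. Two distinct boundary minimizers cannot exist: by strong
   convexity their midpoint is strictly feasible and, f being convex, still a minimizer, hence a
   local and therefore global minimizer of f. Conversely, the minimizer x of f on the compact set K
   also minimizes f on the open halfspace {z. \<nabla>g(x)\<bullet>z < \<nabla>g(x)\<bullet>x}, and for the positively
   homogeneous f this produces the subgradient f(x)/(\<nabla>g(x)\<bullet>x) \<nabla>g(x). The multiplier is
   determined by Euler's identity s\<bullet>x = f x for subgradients s of a homogeneous function. *)

lemma has_derivative_grad:
  fixes g :: "'a::euclidean_space \<Rightarrow> real"
  assumes "g differentiable (at x)"
  shows "(g has_derivative (\<lambda>h. grad g x \<bullet> h)) (at x)"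
proof -
  obtain D where D: "(g has_derivative D) (at x)"
    using assms by (auto simp: differentiable_def)
  have "D = (\<lambda>h. adjoint D 1 \<bullet> h)"
    using adjoint_works[OF has_derivative_linear[OF D], of _ 1] by (simp add: fun_eq_iff inner_commute)
  with D have "\<exists>G. (g has_derivative (\<lambda>h. G \<bullet> h)) (at x)" by metis
  then show ?thesis unfolding grad_def by (rule someI_ex)
qed

lemma has_real_derivative_along_line:
  fixes g :: "'a::real_inner \<Rightarrow> real"
  assumes "(g has_derivative (\<lambda>h. G \<bullet> h)) (at x)"
  shows "((\<lambda>t. g (x + t *\<^sub>R w)) has_real_derivative (G \<bullet> w)) (at 0)"
proof -
  have "((\<lambda>t. x + t *\<^sub>R w) has_derivative (\<lambda>t. t *\<^sub>R w)) (at 0)"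
    by (auto intro!: derivative_eq_intros)
  moreover have "(g has_derivative (\<lambda>h. G \<bullet> h)) (at (x + 0 *\<^sub>R w))"
    using assms by simp
  ultimately have "((\<lambda>t. g (x + t *\<^sub>R w)) has_derivative (\<lambda>t. G \<bullet> (t *\<^sub>R w))) (at 0)"
    by (rule has_derivative_compose)
  then show ?thesis
    unfolding has_field_derivative_def by (rule has_derivative_eq_rhs) (simp add: fun_eq_iff)
qed

lemma convex_on_gradient_inequality:
  fixes g :: "'a::real_inner \<Rightarrow> real"
  assumes convex: "convex_on UNIV g" and deriv: "(g has_derivative (\<lambda>h. G \<bullet> h)) (at x)"
  shows "g x + G \<bullet> (z - x) \<le> g z"
proof -
  define \<phi> where "\<phi> t = g (x + t *\<^sub>R (z - x))" for t
  have "convex_on UNIV \<phi>"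
  proof (rule convex_onI)
    fix t a b :: real assume "0 < t" "t < 1"
    moreover have "x + ((1 - t) * a + t * b) *\<^sub>R (z - x)
        = (1 - t) *\<^sub>R (x + a *\<^sub>R (z - x)) + t *\<^sub>R (x + b *\<^sub>R (z - x))"
      by (simp add: algebra_simps)
    ultimately show "\<phi> ((1 - t) *\<^sub>R a + t *\<^sub>R b) \<le> (1 - t) * \<phi> a + t * \<phi> b"
      unfolding \<phi>_def using convex_onD[OF convex, of t "x + a *\<^sub>R (z - x)" "x + b *\<^sub>R (z - x)"]
      by simp
  qed simp
  moreover have "(\<phi> has_real_derivative (G \<bullet> (z - x))) (at 0)"
    unfolding \<phi>_def by (rule has_real_derivative_along_line[OF deriv])
  ultimately have "\<phi> 1 - \<phi> 0 \<ge> (G \<bullet> (z - x)) * (1 - 0)"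
    by (intro convex_on_imp_above_tangent[of UNIV]) (auto simp: has_real_derivative_iff)
  then show ?thesis unfolding \<phi>_def by simp
qed

lemma strongly_convex_imp_convex_on:
  fixes g :: "'a::real_normed_vector \<Rightarrow> real"
  assumes "strongly_convex g"
  shows "convex_on UNIV g"
proof (rule convex_onI)
  fix x y :: 'a and t :: real assume t: "0 < t" "t < 1"
  obtain mu where "mu > 0" and sc: "\<forall>x y t. 0 \<le> t \<and> t \<le> 1 \<longrightarrow>
      g (t *\<^sub>R x + (1 - t) *\<^sub>R y) \<le> t * g x + (1 - t) * g y - mu / 2 * t * (1 - t) * (norm (x - y))\<^sup>2"
    using assms unfolding strongly_convex_def by blast
  then have "0 \<le> mu / 2 * (1 - t) * t * (norm (x - y))\<^sup>2" using t by simp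
  with sc[rule_format, of "1 - t" x y] t
  show "g ((1 - t) *\<^sub>R x + t *\<^sub>R y) \<le> (1 - t) * g x + t * g y"
    by simp
qed simp

lemma strongly_convex_midpointE:
  fixes g :: "'a::real_normed_vector \<Rightarrow> real"
  assumes "strongly_convex g"
  obtains mu where "mu > 0"
    and "\<And>x y. g (midpoint x y) \<le> (g x + g y) / 2 - mu / 8 * (norm (x - y))\<^sup>2"
proof -
  obtain mu where "mu > 0" and sc: "\<forall>x y t. 0 \<le> t \<and> t \<le> 1 \<longrightarrow>
      g (t *\<^sub>R x + (1 - t) *\<^sub>R y) \<le> t * g x + (1 - t) * g y - mu / 2 * t * (1 - t) * (norm (x - y))\<^sup>2"
    using assms unfolding strongly_convex_def by blast
  moreover have "g (midpoint x y) \<le> (g x + g y) / 2 - mu / 8 * (norm (x - y))\<^sup>2" for x y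
    using sc[rule_format, of "1/2" x y] by (simp add: midpoint_def scaleR_add_right add_divide_distrib)
  ultimately show ?thesis using that by blast
qed

lemma strongly_convex_midpoint_less:
  fixes g :: "'a::real_normed_vector \<Rightarrow> real"
  assumes "strongly_convex g" and "x \<noteq> y"
  shows "g (midpoint x y) < (g x + g y) / 2"
proof -
  obtain mu where "mu > 0"
    and mid: "\<And>x y. g (midpoint x y) \<le> (g x + g y) / 2 - mu / 8 * (norm (x - y))\<^sup>2"
    using strongly_convex_midpointE[OF assms(1)] by blast
  then have "0 < mu / 8 * (norm (x - y))\<^sup>2" using assms(2) by simp
  with mid[of x y] show ?thesis by linarith
qed

lemma quadratic_le_linear_bound:
  fixes a b k r :: real
  assumes "a > 0" and "k \<ge> 0" and "a * r\<^sup>2 \<le> b + k * r"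
  shows "r \<le> max 1 ((\<bar>b\<bar> + k) / a)"
proof (cases "r \<le> 1")
  case False
  have "\<bar>b\<bar> * 1 \<le> \<bar>b\<bar> * r" using False by (intro mult_left_mono) auto
  with assms(3) have "(a * r) * r \<le> (\<bar>b\<bar> + k) * r"
    by (simp add: power2_eq_square algebra_simps)
  then have "a * r \<le> \<bar>b\<bar> + k" using False by simp
  then have "r \<le> (\<bar>b\<bar> + k) / a" using assms(1) by (simp add: pos_le_divide_eq mult.commute)
  then show ?thesis by simp
qed simp

lemma strongly_convex_bounded_sublevel:
  fixes g :: "'a::euclidean_space \<Rightarrow> real"
  assumes sc: "strongly_convex g" and diff: "g differentiable (at 0)"
  shows "bounded {z. g z \<le> c}"
proof -
  obtain mu where mu: "mu > 0"
    and sc: "\<And>x y. g (midpoint x y) \<le> (g x + g y) / 2 - mu / 8 * (norm (x - y))\<^sup>2"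
    using strongly_convex_midpointE[OF assms(1)] by blast
  define G where "G = grad g 0"
  have "norm z \<le> max 1 ((\<bar>c - g 0\<bar> + norm G) / (mu / 4))" if "g z \<le> c" for z
  proof (rule quadratic_le_linear_bound)
    have "g 0 + G \<bullet> ((1/2) *\<^sub>R z) \<le> g ((1/2) *\<^sub>R z)"
      using convex_on_gradient_inequality[OF strongly_convex_imp_convex_on[OF assms(1)]
          has_derivative_grad[OF diff], of "(1/2) *\<^sub>R z"] by (simp add: G_def)
    also have "\<dots> \<le> (g z + g 0) / 2 - mu / 8 * (norm z)\<^sup>2"
      using sc[of z 0] by (simp add: midpoint_def)
    finally have "mu / 4 * (norm z)\<^sup>2 \<le> (g z - g 0) - G \<bullet> z"
      by (simp add: inner_scaleR_right field_simps)
    also have "\<dots> \<le> (c - g 0) + norm G * norm z"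
      using \<open>g z \<le> c\<close> norm_cauchy_schwarz[of "- G" z] by simp
    finally show "mu / 4 * (norm z)\<^sup>2 \<le> (c - g 0) + norm G * norm z" .
  qed (use mu in auto)
  then show ?thesis unfolding bounded_iff by blast
qed

lemma convex_on_if_subadditive_homogeneous:
  fixes f :: "'a::real_vector \<Rightarrow> real"
  assumes subadd: "\<And>x y. f (x + y) \<le> f x + f y"
    and hom: "\<And>c x. 0 \<le> c \<Longrightarrow> f (c *\<^sub>R x) = c * f x"
  shows "convex_on UNIV f"
proof (rule convex_onI)
  fix x y :: 'a and t :: real assume "0 < t" "t < 1"
  with subadd[of "(1 - t) *\<^sub>R x" "t *\<^sub>R y"]
  show "f ((1 - t) *\<^sub>R x + t *\<^sub>R y) \<le> (1 - t) * f x + t * f y"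
    by (simp add: hom)
qed simp

lemma subdiff_homogeneous_inner_eq:
  fixes f :: "'a::real_inner \<Rightarrow> real"
  assumes "s \<in> subdiff f x" and hom: "\<And>c. 0 \<le> c \<Longrightarrow> f (c *\<^sub>R x) = c * f x"
  shows "s \<bullet> x = f x"
proof -
  have "f x + s \<bullet> (0 *\<^sub>R x - x) \<le> f (0 *\<^sub>R x)" and "f x + s \<bullet> (2 *\<^sub>R x - x) \<le> f (2 *\<^sub>R x)"
    using assms(1) unfolding subdiff_def by blast+
  then show ?thesis
    using hom[of 0] hom[of 2] by (simp add: inner_diff_right algebra_simps)
qed

lemma le_mult_if_le_mult_greater:
  fixes a b l :: real
  assumes "\<And>t. l < t \<Longrightarrow> a \<le> t * b"
  shows "a \<le> l * b"
proof (rule tendsto_lowerbound)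
  show "((\<lambda>t. t * b) \<longlongrightarrow> l * b) (at_right l)"
    by (intro tendsto_intros)
  show "\<forall>\<^sub>F t in at_right l. a \<le> t * b"
    using eventually_at_right_less by (rule eventually_mono) (rule assms)
qed simp

lemma halfspace_minimizer_inner_neg:
  fixes f :: "'a::real_inner \<Rightarrow> real"
  assumes hom: "\<And>c z. 0 \<le> c \<Longrightarrow> f (c *\<^sub>R z) = c * f z"
    and min: "\<And>z. d \<bullet> z < d \<bullet> x \<Longrightarrow> f x \<le> f z"
    and "f x > 0" and "d \<noteq> 0"
  shows "d \<bullet> x < 0"
proof (rule ccontr)
  assume "\<not> d \<bullet> x < 0"
  have "f x \<le> t * f (- d)" if "0 < t" for t
  proof -
    have "0 < t * (d \<bullet> d)" using that \<open>d \<noteq> 0\<close> by simp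
    with \<open>\<not> d \<bullet> x < 0\<close> show ?thesis
      using min[of "t *\<^sub>R (- d)"] hom[of t "- d"] that by simp
  qed
  then have "f x \<le> 0 * f (- d)" by (rule le_mult_if_le_mult_greater)
  with \<open>f x > 0\<close> show False by simp
qed

lemma halfspace_minimizer_subgradient:
  fixes f :: "'a::real_inner \<Rightarrow> real"
  assumes hom: "\<And>c z. 0 \<le> c \<Longrightarrow> f (c *\<^sub>R z) = c * f z"
    and nonneg: "\<And>z. 0 \<le> f z"
    and min: "\<And>z. d \<bullet> z < d \<bullet> x \<Longrightarrow> f x \<le> f z"
    and neg: "d \<bullet> x < 0"
  shows "(f x / (d \<bullet> x)) *\<^sub>R d \<in> subdiff f x"
  unfolding subdiff_def
proof (intro CollectI allI)
  fix z
  have "f x / (d \<bullet> x) * (d \<bullet> z) \<le> f z"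
  proof (cases "d \<bullet> z < 0")
    case True
    have "f x \<le> t * f z" if "d \<bullet> x / (d \<bullet> z) < t" for t
    proof -
      have "0 < d \<bullet> x / (d \<bullet> z)" using True neg by (simp add: divide_neg_neg)
      moreover have "d \<bullet> (t *\<^sub>R z) < d \<bullet> x"
        using that True by (simp add: neg_divide_less_eq)
      ultimately show ?thesis
        using min[of "t *\<^sub>R z"] hom[of t z] that by simp
    qed
    then have "f x \<le> d \<bullet> x / (d \<bullet> z) * f z"
      by (rule le_mult_if_le_mult_greater)
    then show ?thesis using True neg by (simp add: field_simps)
  next
    case False
    then have "f x / (d \<bullet> x) * (d \<bullet> z) \<le> 0"
      using neg nonneg[of x] by (simp add: mult_nonpos_nonneg divide_nonneg_neg)
    then show ?thesis using nonneg[of z] by linarith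
  qed
  then show "f x + (f x / (d \<bullet> x)) *\<^sub>R d \<bullet> (z - x) \<le> f z"
    using neg by (simp add: inner_diff_right algebra_simps)
qed

lemma kkt_point_iff:
  "kkt_point f g x y \<longleftrightarrow> 0 \<le> y \<and> g x \<le> 0 \<and> y * g x = 0 \<and> - (y *\<^sub>R grad g x) \<in> subdiff f x"
proof -
  have "0 \<in> (\<lambda>s. s + y *\<^sub>R grad g x) ` subdiff f x \<longleftrightarrow> - (y *\<^sub>R grad g x) \<in> subdiff f x"
    by (simp add: image_iff eq_commute[of 0] add_eq_0_iff2)
  then show ?thesis unfolding kkt_point_def by blast
qed

locale convex_program =
  fixes f g :: "'a::euclidean_space \<Rightarrow> real"
  assumes convex_f: "convex_on UNIV f"
    and differentiable_g: "\<And>x. g differentiable (at x)"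
    and strongly_convex_g: "strongly_convex g"
    and slater: "\<exists>x. g x < 0"
    and minimizers_infeasible: "\<And>x. \<forall>z. f x \<le> f z \<Longrightarrow> 0 < g x"
begin

definition constrained_minimizer :: "'a \<Rightarrow> bool" where
  "constrained_minimizer x \<longleftrightarrow> g x \<le> 0 \<and> (\<forall>z. g z \<le> 0 \<longrightarrow> f x \<le> f z)"

lemma convex_g: "convex_on UNIV g"
  using strongly_convex_g by (rule strongly_convex_imp_convex_on)

lemma continuous_g: "continuous_on UNIV g"
  using differentiable_g
  by (simp add: differentiable_imp_continuous_within continuous_at_imp_continuous_on)

lemma g_above_tangent: "g x + grad g x \<bullet> (z - x) \<le> g z"
  using convex_g has_derivative_grad[OF differentiable_g] by (rule convex_on_gradient_inequality)

lemma constrained_minimizer_on_boundary: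
  assumes "constrained_minimizer x"
  shows "g x = 0"
proof (rule ccontr)
  assume "g x \<noteq> 0"
  have "open {z. g z < 0}"
    using continuous_g by (intro open_Collect_less) auto
  moreover from \<open>g x \<noteq> 0\<close> assms have "x \<in> {z. g z < 0}"
    by (simp add: constrained_minimizer_def)
  ultimately obtain e where "e > 0" and "ball x e \<subseteq> {z. g z < 0}"
    by (rule openE)
  with assms have "\<forall>z\<in>ball x e. f x \<le> f z"
    by (auto simp: constrained_minimizer_def)
  with \<open>e > 0\<close> have "\<forall>z\<in>UNIV. f x \<le> f z"
    by (intro convex_local_global_minimum[OF _ convex_f]) auto
  then have "0 < g x" by (intro minimizers_infeasible) simp
  with assms show False by (simp add: constrained_minimizer_def)
qed

lemma constrained_minimizer_unique:
  assumes x1: "constrained_minimizer x1" and x2: "constrained_minimizer x2"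
  shows "x1 = x2"
proof (rule ccontr)
  assume "x1 \<noteq> x2"
  have g: "g x1 = 0" "g x2 = 0"
    using x1 x2 by (simp_all add: constrained_minimizer_on_boundary)
  have "f x1 = f x2"
    using x1 x2 g unfolding constrained_minimizer_def by (simp add: order_antisym)
  let ?m = "midpoint x1 x2"
  have "g ?m < 0"
    using strongly_convex_midpoint_less[OF strongly_convex_g \<open>x1 \<noteq> x2\<close>] g by simp
  moreover have "f ?m \<le> f x1"
    using convex_onD[OF convex_f, of "1/2" x1 x2] \<open>f x1 = f x2\<close>
    by (simp add: midpoint_def scaleR_add_right)
  ultimately have "constrained_minimizer ?m"
    using x1 unfolding constrained_minimizer_def by fastforce
  with \<open>g ?m < 0\<close> show False by (simp add: constrained_minimizer_on_boundary)
qed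

lemma constrained_minimizer_exists: "\<exists>x. constrained_minimizer x"
proof -
  let ?K = "{z. g z \<le> 0}"
  have "compact ?K"
    unfolding compact_eq_bounded_closed
    using strongly_convex_bounded_sublevel[OF strongly_convex_g differentiable_g] continuous_g
    by (auto intro: closed_Collect_le)
  moreover have "?K \<noteq> {}" using slater by (auto intro: less_imp_le)
  moreover have "continuous_on ?K f"
    using convex_on_continuous[OF open_UNIV convex_f] by (rule continuous_on_subset) simp
  ultimately obtain x where "x \<in> ?K" and "\<forall>z\<in>?K. f x \<le> f z"
    using continuous_attains_inf by blast
  then show ?thesis unfolding constrained_minimizer_def by auto
qed

lemma grad_nonzero_on_boundary:
  assumes "g x = 0"
  shows "grad g x \<noteq> 0"
proof
  assume "grad g x = 0"
  obtain z where "g z < 0" using slater by blast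
  moreover have "g x \<le> g z" using \<open>grad g x = 0\<close> g_above_tangent[of x z] by simp
  ultimately show False using assms by simp
qed

lemma constrained_minimizer_halfspace_minimizer:
  assumes x: "constrained_minimizer x" and z: "grad g x \<bullet> z < grad g x \<bullet> x"
  shows "f x \<le> f z"
proof -
  have deriv: "((\<lambda>t. g (x + t *\<^sub>R (z - x))) has_real_derivative grad g x \<bullet> (z - x)) (at 0)"
    using has_derivative_grad[OF differentiable_g] by (rule has_real_derivative_along_line)
  have "grad g x \<bullet> (z - x) < 0" using z by (simp add: inner_diff_right)
  from DERIV_neg_dec_right[OF deriv this]
  have "\<exists>e>0. \<forall>h>0. h < e \<longrightarrow> g (x + h *\<^sub>R (z - x)) < g x"
    by simp
  then obtain e where "e > 0"
    and descent: "\<And>h. 0 < h \<Longrightarrow> h < e \<Longrightarrow> g (x + h *\<^sub>R (z - x)) < g x"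
    by blast
  define h where "h = min (e / 2) 1"
  have h: "0 < h" "h < e" "h \<le> 1" using \<open>e > 0\<close> by (auto simp: h_def)
  have "g ((1 - h) *\<^sub>R x + h *\<^sub>R z) < 0"
    using descent[OF h(1,2)] constrained_minimizer_on_boundary[OF x] by (simp add: algebra_simps)
  with x have "f x \<le> f ((1 - h) *\<^sub>R x + h *\<^sub>R z)"
    by (simp add: constrained_minimizer_def)
  also have "\<dots> \<le> (1 - h) * f x + h * f z"
    using convex_onD[OF convex_f] h by simp
  finally have "h * f x \<le> h * f z" by (simp add: algebra_simps)
  with h(1) show ?thesis by simp
qed

lemma kkt_point_imp_constrained_minimizer:
  assumes "kkt_point f g x y"
  shows "constrained_minimizer x" and "0 < y"
proof -
  from assms have "0 \<le> y" "g x \<le> 0" "y * g x = 0" and s: "- (y *\<^sub>R grad g x) \<in> subdiff f x"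
    by (simp_all add: kkt_point_iff)
  have lagrangian: "f x - y * g z \<le> f z" for z
  proof -
    have "y * (grad g x \<bullet> (z - x)) \<le> y * (g z - g x)"
      using g_above_tangent[of x z] \<open>0 \<le> y\<close> by (intro mult_left_mono) auto
    moreover have "f x - y * (grad g x \<bullet> (z - x)) \<le> f z"
      using s unfolding subdiff_def by simp
    ultimately show ?thesis
      using \<open>y * g x = 0\<close> by (simp add: right_diff_distrib)
  qed
  show "constrained_minimizer x"
    unfolding constrained_minimizer_def
  proof (intro conjI allI impI)
    fix z assume "g z \<le> 0"
    with \<open>0 \<le> y\<close> have "y * g z \<le> 0" by (rule mult_nonneg_nonpos)
    with lagrangian[of z] show "f x \<le> f z" by linarith
  qed fact
  show "0 < y"
  proof (rule ccontr)
    assume "\<not> 0 < y"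
    with \<open>0 \<le> y\<close> lagrangian have "\<forall>z. f x \<le> f z" by simp
    then have "0 < g x" by (rule minimizers_infeasible)
    with \<open>g x \<le> 0\<close> show False by simp
  qed
qed

end

locale seminorm_program = convex_program +
  assumes f_scaleR: "\<And>c x. f (c *\<^sub>R x) = \<bar>c\<bar> * f x"
begin

lemma f_scaleR_nonneg: "0 \<le> c \<Longrightarrow> f (c *\<^sub>R x) = c * f x"
  by (simp add: f_scaleR)

lemma f_nonneg: "0 \<le> f x"
proof -
  have "f 0 \<le> (1 - 1/2) * f x + 1/2 * f (- x)"
    using convex_onD[OF convex_f, of "1/2" x "- x"] by simp
  then show ?thesis
    using f_scaleR[of 0 x] f_scaleR[of "- 1" x] by simp
qed

lemma f_pos_on_boundary:
  assumes "g x = 0"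
  shows "0 < f x"
proof (rule ccontr)
  assume "\<not> 0 < f x"
  then have "f x \<le> f z" for z using f_nonneg[of z] by linarith
  then have "0 < g x" by (intro minimizers_infeasible allI)
  with assms show False by simp
qed

lemma kkt_point_multiplier_eq:
  assumes "kkt_point f g x y"
  shows "y = f x / - (grad g x \<bullet> x)"
proof -
  from assms have "- (y *\<^sub>R grad g x) \<in> subdiff f x" by (simp add: kkt_point_iff)
  then have "- (y *\<^sub>R grad g x) \<bullet> x = f x"
    by (rule subdiff_homogeneous_inner_eq) (simp add: f_scaleR)
  then have euler: "y * - (grad g x \<bullet> x) = f x" by simp
  moreover have "0 < f x"
    using assms by (intro f_pos_on_boundary constrained_minimizer_on_boundary
        kkt_point_imp_constrained_minimizer)
  ultimately have "- (grad g x \<bullet> x) \<noteq> 0" by auto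
  with euler show ?thesis by (simp add: field_simps)
qed

lemma kkt_point_exists: "\<exists>x y. kkt_point f g x y"
proof -
  obtain x where x: "constrained_minimizer x"
    using constrained_minimizer_exists by blast
  define d where "d = grad g x"
  have "g x = 0" using x by (rule constrained_minimizer_on_boundary)
  then have "0 < f x" and "d \<noteq> 0"
    by (simp_all add: f_pos_on_boundary grad_nonzero_on_boundary d_def)
  have halfspace_min: "\<And>z. d \<bullet> z < d \<bullet> x \<Longrightarrow> f x \<le> f z"
    using constrained_minimizer_halfspace_minimizer[OF x] by (simp add: d_def)
  have "d \<bullet> x < 0"
    using f_scaleR_nonneg halfspace_min \<open>0 < f x\<close> \<open>d \<noteq> 0\<close>
    by (rule halfspace_minimizer_inner_neg)
  have "(f x / (d \<bullet> x)) *\<^sub>R d \<in> subdiff f x"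
    using f_scaleR_nonneg f_nonneg halfspace_min \<open>d \<bullet> x < 0\<close>
    by (rule halfspace_minimizer_subgradient)
  moreover have "0 \<le> f x / - (d \<bullet> x)"
    using \<open>0 < f x\<close> \<open>d \<bullet> x < 0\<close> by (simp add: divide_nonneg_neg)
  ultimately have "kkt_point f g x (f x / - (d \<bullet> x))"
    using \<open>g x = 0\<close> by (simp add: kkt_point_iff d_def)
  then show ?thesis by blast
qed

theorem ex1_kkt_point: "\<exists>!(x, y). kkt_point f g x y"
proof -
  obtain x y where xy: "kkt_point f g x y" using kkt_point_exists by blast
  show ?thesis
  proof (rule ex1I[of _ "(x, y)"])
    fix p assume "case p of (x', y') \<Rightarrow> kkt_point f g x' y'"
    then obtain x' y' where p: "p = (x', y')" and x'y': "kkt_point f g x' y'"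
      by (cases p) simp
    have "x' = x"
      using x'y' xy by (intro constrained_minimizer_unique kkt_point_imp_constrained_minimizer)
    with p show "p = (x, y)"
      using kkt_point_multiplier_eq[OF x'y'] kkt_point_multiplier_eq[OF xy] by simp
  qed (simp add: xy)
qed

end

lemma block_norm_scaleR: "block_norm blk i (c *\<^sub>R x) = \<bar>c\<bar> * block_norm blk i x"
proof -
  have "(\<Sum>j\<in>{j. blk j = i}. ((c *\<^sub>R x) $ j)\<^sup>2) = c\<^sup>2 * (\<Sum>j\<in>{j. blk j = i}. (x $ j)\<^sup>2)"
    by (simp add: sum_distrib_left power_mult_distrib)
  then show ?thesis by (simp add: block_norm_def real_sqrt_mult)
qed

lemma block_norm_triangle:
  "block_norm blk i (x + y) \<le> block_norm blk i x + block_norm blk i y"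
  using L2_set_triangle_ineq[of "\<lambda>j. x $ j" "\<lambda>j. y $ j" "{j. blk j = i}"]
  by (simp add: block_norm_def L2_set_def)

theorem proposition5:
  fixes B :: nat and blk :: "'n::finite \<Rightarrow> nat" and p :: "nat \<Rightarrow> real"
    and f g :: "real ^ 'n \<Rightarrow> real"
  assumes blocks: "\<forall>j. blk j \<in> {1..B}"
    and p_pos: "\<forall>i\<in>{1..B}. p i > 0"
    and f_def: "\<forall>x. f x = (\<Sum>i=1..B. p i * block_norm blk i x)"
    and g_diff: "\<forall>x. g differentiable (at x)"
    and g_sc: "strongly_convex g"
    and slater: "\<exists>xt. g xt < 0"
    and minimizers: "\<forall>x0. (\<forall>z. f x0 \<le> f z) \<longrightarrow> g x0 > 0"
  shows "\<exists>!(x, y). kkt_point f g x y"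
proof -
  have scaleR: "f (c *\<^sub>R x) = \<bar>c\<bar> * f x" for c x
    using f_def by (simp add: block_norm_scaleR sum_distrib_left mult.left_commute)
  have "f (x + y) \<le> f x + f y" for x y
  proof -
    have "(\<Sum>i=1..B. p i * block_norm blk i (x + y))
        \<le> (\<Sum>i=1..B. p i * block_norm blk i x + p i * block_norm blk i y)"
      using p_pos block_norm_triangle
      by (intro sum_mono) (simp add: mult_left_mono flip: distrib_left)
    then show ?thesis using f_def by (simp add: sum.distrib)
  qed
  with scaleR interpret seminorm_program f g
    using g_diff g_sc slater minimizers
    by unfold_locales (simp_all add: convex_on_if_subadditive_homogeneous)
  show ?thesis by (rule ex1_kkt_point)
qed

end
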